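(* The function $U(n)=\sum_{j=1}^n\frac{1}{j^2}$ of the positive integer variable $n$ is a transcendental function in $n$ over $\overline{\mathbb{Q}}$.
   Context: $\overline{\mathbb{Q}}\subseteq\mathbb{C}$ denotes the field of algebraic numbers. A function $f(n)$ of the positive integer variable $n$ is an algebraic function over a subfield $K\subseteq\mathbb{C}$ if there exist polynomials $q_0,\dots,q_k\in K[n]$ with $q_k\neq 0$ such that $q_k(n)f(n)^k+\cdots+q_1(n)f(n)+q_0(n)=0$ for all positive integers $n$; otherwise $f$ is a transcendental function over $K$. *)

theory Defs
  imports "HOL-Computational_Algebra.Polynomial" Complex_Main
begin

definition alg_poly :: "complex poly \<Rightarrow> bool" where
  "alg_poly q \<longleftrightarrow> (\<forall>i. algebraic (coeff q i))"

definition algebraic_function_over_alg :: "(nat \<Rightarrow> complex) \<Rightarrow> bool" where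
  "algebraic_function_over_alg f \<longleftrightarrow>
     (\<exists>(k::nat) (q::nat \<Rightarrow> complex poly).
        (\<forall>i\<le>k. alg_poly (q i)) \<and> q k \<noteq> 0 \<and>
        (\<forall>n::nat. n \<ge> 1 \<longrightarrow> (\<Sum>i\<le>k. poly (q i) (of_nat n) * f n ^ i) = 0))"

definition transcendental_function_over_alg :: "(nat \<Rightarrow> complex) \<Rightarrow> bool" where
  "transcendental_function_over_alg f \<longleftrightarrow> \<not> algebraic_function_over_alg f"

end

theory Submission
  imports Defs "HOL-Computational_Algebra.Polynomial_Factorial"
    "HOL-Computational_Algebra.Field_as_Ring"
begin

text \<open>Take a relation \<open>\<Sum>i\<le>k. q\<^sub>i(n) U(n)\<^sup>i = 0\<close> (for all large \<open>n\<close>) with \<open>q\<^sub>k \<noteq> 0\<close> and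
  \<open>k\<close> minimal. Substituting \<open>U(n+1) = U(n) + 1/(n+1)\<^sup>2\<close> into the relation at \<open>n+1\<close> and
  cancelling its leading term against the relation at \<open>n\<close> yields a relation of degree \<open>k - 1\<close>,
  which by minimality vanishes identically. Its top coefficient then says that
  \<open>r = q\<^bsub>k-1\<^esub>/q\<^sub>k\<close> satisfies \<open>r(X) - r(X+1) = k/(X+1)\<^sup>2\<close>, which is impossible for a rational
  function: look at the poles of \<open>r\<close> with extreme real parts. The argument works for arbitrary
  complex coefficients.\<close>

definition shift_poly :: "'a::comm_semiring_1 poly \<Rightarrow> 'a poly" where
  "shift_poly p = p \<circ>\<^sub>p [:1, 1:]"

lemma poly_shift_poly [simp]: "poly (shift_poly p) x = poly p (x + 1)"
  by (simp add: shift_poly_def poly_pcompose add.commute)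

lemma shift_poly_mult: "shift_poly (p * q) = shift_poly p * shift_poly q"
  by (simp add: shift_poly_def pcompose_mult)

lemma shift_poly_eq_0_iff [simp]: "shift_poly p = 0 \<longleftrightarrow> p = (0 :: 'a::idom poly)"
  by (simp add: shift_poly_def pcompose_eq_0_iff)

lemma sum_atMost_triangle_swap:
  fixes g :: "nat \<Rightarrow> nat \<Rightarrow> 'a::comm_monoid_add"
  shows "(\<Sum>i\<le>k. \<Sum>j\<le>i. g i j) = (\<Sum>j\<le>k. \<Sum>i=j..k. g i j)"
proof (induction k)
  case (Suc k)
  have "(\<Sum>j\<le>k. \<Sum>i=j..Suc k. g i j) = (\<Sum>j\<le>k. (\<Sum>i=j..k. g i j) + g (Suc k) j)"
    by (intro sum.cong refl) simp
  then show ?case using Suc by (simp add: sum.distrib add_ac)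
qed simp

lemma poly_eq_0_if_eventually_zero_at_nats:
  fixes p :: "'a::{idom, ring_char_0} poly"
  assumes "\<forall>n\<ge>N. poly p (of_nat n) = 0"
  shows "p = 0"
proof (rule ccontr)
  assume "p \<noteq> 0"
  have "inj_on (of_nat :: nat \<Rightarrow> 'a) {N..}"
    by (meson inj_of_nat inj_on_subset subset_UNIV)
  then have "infinite (of_nat ` {N..} :: 'a set)"
    using finite_imageD infinite_Ici by blast
  moreover have "of_nat ` {N..} \<subseteq> {x. poly p x = 0}"
    using assms by auto
  ultimately show False
    using poly_roots_finite[OF \<open>p \<noteq> 0\<close>] finite_subset by blast
qed

text \<open>For \<open>f(n+1) = f(n) + 1/d(n)\<close>: the relation \<open>\<Sum>i\<le>k. q\<^sub>i(n) f(n)\<^sup>i = 0\<close> times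
  \<open>q\<^sub>k(n+1) d(n)\<^sup>k\<close>, minus the relation at \<open>n+1\<close> times \<open>q\<^sub>k(n) d(n)\<^sup>k\<close>, expanded in powers
  of \<open>f(n)\<close>. The factor \<open>d(n)\<^sup>k\<close> clears denominators and the leading terms cancel.\<close>
definition reduced_relation ::
    "'a::comm_ring_1 poly \<Rightarrow> (nat \<Rightarrow> 'a poly) \<Rightarrow> nat \<Rightarrow> nat \<Rightarrow> 'a poly" where
  "reduced_relation d q k j = shift_poly (q k) * q j * d ^ k
     - q k * (\<Sum>i=j..k. smult (of_nat (i choose j)) (shift_poly (q i) * d ^ (k - i + j)))"

lemma reduced_relation_top [simp]: "reduced_relation d q k k = 0"
  by (simp add: reduced_relation_def)

lemma reduced_relation_below_top:
  "reduced_relation d q (Suc m) m = d ^ m *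
     (d * (shift_poly (q (Suc m)) * q m - q (Suc m) * shift_poly (q m))
      - smult (of_nat (Suc m)) (q (Suc m) * shift_poly (q (Suc m))))"
  by (simp add: reduced_relation_def algebra_simps)

lemma power_mult_inverse_binomial:
  fixes x h U :: "'a::comm_ring_1"
  assumes "x * h = 1" and "i \<le> k"
  shows "x ^ k * (U + h) ^ i = (\<Sum>j\<le>i. of_nat (i choose j) * U ^ j * x ^ (k - i + j))"
proof -
  have "x ^ k * h ^ (i - j) = x ^ (k - i + j)" if "j \<le> i" for j
  proof -
    have "x ^ k = x ^ (k - i + j) * x ^ (i - j)"
      using that \<open>i \<le> k\<close> by (simp flip: power_add)
    then show ?thesis
      using assms(1) by (simp add: mult.assoc flip: power_mult_distrib)
  qed
  then show ?thesis
    unfolding binomial_ring[of U h i] sum_distrib_left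
    by (intro sum.cong refl) (simp add: mult.left_commute[of "x ^ k"])
qed

lemma reduced_relation_eval:
  fixes x h U :: "'a::comm_ring_1"
  assumes "poly d x * h = 1"
  shows "(\<Sum>j\<le>k. poly (reduced_relation d q k j) x * U ^ j)
    = poly (q k) (x + 1) * poly d x ^ k * (\<Sum>i\<le>k. poly (q i) x * U ^ i)
      - poly (q k) x * poly d x ^ k * (\<Sum>i\<le>k. poly (q i) (x + 1) * (U + h) ^ i)"
proof -
  let ?c = "\<lambda>j. \<Sum>i=j..k. of_nat (i choose j) * (poly (q i) (x + 1) * poly d x ^ (k - i + j))"
  have "poly d x ^ k * (\<Sum>i\<le>k. poly (q i) (x + 1) * (U + h) ^ i)
      = (\<Sum>i\<le>k. \<Sum>j\<le>i. poly (q i) (x + 1) * (of_nat (i choose j) * U ^ j * poly d x ^ (k - i + j)))"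
    unfolding sum_distrib_left
    by (intro sum.cong refl)
       (simp add: mult.left_commute[of "poly d x ^ k"] power_mult_inverse_binomial[OF assms]
          sum_distrib_left)
  also have "\<dots> = (\<Sum>j\<le>k. ?c j * U ^ j)"
    unfolding sum_atMost_triangle_swap
    by (intro sum.cong refl) (simp add: sum_distrib_left sum_distrib_right mult_ac)
  finally have shifted: "poly d x ^ k * (\<Sum>i\<le>k. poly (q i) (x + 1) * (U + h) ^ i)
      = (\<Sum>j\<le>k. ?c j * U ^ j)" .
  have "poly (reduced_relation d q k j) x * U ^ j
      = poly (q k) (x + 1) * poly d x ^ k * (poly (q j) x * U ^ j) - poly (q k) x * (?c j * U ^ j)"
    for j
    by (simp add: reduced_relation_def poly_sum left_diff_distrib right_diff_distrib mult_ac)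
  then have "(\<Sum>j\<le>k. poly (reduced_relation d q k j) x * U ^ j)
      = poly (q k) (x + 1) * poly d x ^ k * (\<Sum>i\<le>k. poly (q i) x * U ^ i)
        - poly (q k) x * (\<Sum>j\<le>k. ?c j * U ^ j)"
    by (simp only: sum_subtractf sum_distrib_left)
  then show ?thesis
    by (simp only: shifted mult.assoc)
qed

lemma relation_reduction:
  fixes f :: "nat \<Rightarrow> 'a::field"
  assumes step: "\<And>n. f (Suc n) = f n + 1 / poly d (of_nat n)"
    and d_nonzero: "\<And>n. poly d (of_nat n) \<noteq> 0"
    and rel: "\<forall>n\<ge>N. (\<Sum>i\<le>k. poly (q i) (of_nat n) * f n ^ i) = 0"
  shows "\<forall>n\<ge>N. (\<Sum>j\<le>k. poly (reduced_relation d q k j) (of_nat n) * f n ^ j) = 0"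
proof (intro allI impI)
  fix n assume "n \<ge> N"
  have inverse: "poly d (of_nat n) * (1 / poly d (of_nat n)) = 1"
    using d_nonzero by simp
  have "(\<Sum>i\<le>k. poly (q i) (of_nat n + 1) * (f n + 1 / poly d (of_nat n)) ^ i) = 0"
    using rel[rule_format, of "Suc n"] \<open>n \<ge> N\<close> step[of n] by (simp add: add.commute)
  then show "(\<Sum>j\<le>k. poly (reduced_relation d q k j) (of_nat n) * f n ^ j) = 0"
    using rel \<open>n \<ge> N\<close> by (simp add: reduced_relation_eval[OF inverse])
qed

text \<open>Evaluating the identity at a root \<open>z\<close> of \<open>a\<close> of maximal real part forces \<open>z = -1\<close>, and
  evaluating it at \<open>w - 1\<close> for a root \<open>w\<close> of minimal real part forces \<open>w = 0\<close>; coprimality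
  guarantees \<open>b\<close> does not vanish at roots of \<open>a\<close>.\<close>
lemma coprime_shift_identity_impossible:
  fixes a b :: "complex poly" and c :: complex
  assumes "a \<noteq> 0" "c \<noteq> 0" "coprime a b"
    and identity: "\<And>x. (x + 1)\<^sup>2 * (poly a (x + 1) * poly b x - poly a x * poly b (x + 1))
                       = c * (poly a x * poly a (x + 1))"
  shows False
proof -
  define R where "R = {z. poly a z = 0}"
  have b_nonzero: "poly b z \<noteq> 0" if "z \<in> R" for z
  proof
    assume "poly b z = 0"
    then have "[:-z, 1:] dvd a" "[:-z, 1:] dvd b"
      using that by (simp_all add: R_def poly_eq_0_iff_dvd)
    then have "is_unit [:-z, 1:]"
      using \<open>coprime a b\<close> by (meson coprime_common_divisor)
    then show False
      by (simp add: is_unit_poly_iff)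
  qed
  have "finite R"
    unfolding R_def using poly_roots_finite[OF \<open>a \<noteq> 0\<close>] .
  moreover have "R \<noteq> {}"
    using identity[of "-1"] \<open>c \<noteq> 0\<close> by (auto simp: R_def)
  ultimately have "Max (Re ` R) \<in> Re ` R" "Min (Re ` R) \<in> Re ` R"
    by simp_all
  then obtain z w where "z \<in> R" "Re z = Max (Re ` R)" "w \<in> R" "Re w = Min (Re ` R)"
    by (metis imageE)
  then have z: "z \<in> R" "\<And>y. y \<in> R \<Longrightarrow> Re y \<le> Re z"
    and w: "w \<in> R" "\<And>y. y \<in> R \<Longrightarrow> Re w \<le> Re y"
    using \<open>finite R\<close> by auto
  have "z + 1 \<notin> R"
    using z(2)[of "z + 1"] by auto
  then have "z = -1"
    using identity[of z] z(1) b_nonzero[OF z(1)] by (auto simp: R_def add_eq_0_iff2)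
  have "w - 1 \<notin> R"
    using w(2)[of "w - 1"] by auto
  then have "w = 0"
    using identity[of "w - 1"] w(1) b_nonzero[OF w(1)] by (auto simp: R_def)
  show False
    using z(2)[OF w(1)] \<open>z = -1\<close> \<open>w = 0\<close> by simp
qed

lemma shift_identity_impossible:
  fixes a b :: "complex poly" and c :: complex
  assumes "a \<noteq> 0" "c \<noteq> 0"
    and identity: "[:1, 1:]\<^sup>2 * (shift_poly a * b - a * shift_poly b) = smult c (a * shift_poly a)"
  shows False
proof -
  define g where "g = gcd a b"
  obtain a' b' where a': "a = a' * g" and b': "b = b' * g" and "coprime a' b'"
    using gcd_coprime_exists[of a b] \<open>a \<noteq> 0\<close> unfolding g_def by auto
  have "g * shift_poly g \<noteq> 0"
    using \<open>a \<noteq> 0\<close> by (simp add: g_def)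
  moreover have "(g * shift_poly g) * ([:1, 1:]\<^sup>2 * (shift_poly a' * b' - a' * shift_poly b'))
      = (g * shift_poly g) * smult c (a' * shift_poly a')"
    using identity unfolding a' b' shift_poly_mult by (simp add: algebra_simps)
  ultimately have reduced:
      "[:1, 1:]\<^sup>2 * (shift_poly a' * b' - a' * shift_poly b') = smult c (a' * shift_poly a')"
    using mult_left_cancel by blast
  have "(x + 1)\<^sup>2 * (poly a' (x + 1) * poly b' x - poly a' x * poly b' (x + 1))
      = c * (poly a' x * poly a' (x + 1))" for x
    using arg_cong[OF reduced, of "\<lambda>p. poly p x"] by (simp add: add.commute)
  moreover have "a' \<noteq> 0"
    using \<open>a \<noteq> 0\<close> a' by auto
  ultimately show False
    using coprime_shift_identity_impossible \<open>c \<noteq> 0\<close> \<open>coprime a' b'\<close> by blast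
qed

lemma no_eventual_algebraic_relation:
  fixes f :: "nat \<Rightarrow> complex" and q :: "nat \<Rightarrow> complex poly"
  assumes step: "\<And>n. f (Suc n) = f n + 1 / (of_nat n + 1)\<^sup>2"
  shows "q k \<noteq> 0 \<Longrightarrow> \<forall>n\<ge>N. (\<Sum>i\<le>k. poly (q i) (of_nat n) * f n ^ i) = 0 \<Longrightarrow> False"
proof (induction k arbitrary: q)
  case 0
  then show ?case
    using poly_eq_0_if_eventually_zero_at_nats[of N "q 0"] by simp
next
  case (Suc m)
  define d :: "complex poly" where "d = [:1, 1:]\<^sup>2"
  define r where "r = reduced_relation d q (Suc m)"
  have poly_d: "poly d (of_nat n) = (of_nat n + 1)\<^sup>2" for n
    by (simp add: d_def add.commute)
  have "poly d (of_nat n) \<noteq> 0" for n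
    using of_nat_neq_0[of n, where 'a = complex] by (simp add: poly_d add.commute)
  then have "\<forall>n\<ge>N. (\<Sum>j\<le>Suc m. poly (r j) (of_nat n) * f n ^ j) = 0"
    unfolding r_def using relation_reduction[OF _ _ Suc.prems(2)] by (simp add: poly_d step)
  then have "\<forall>n\<ge>N. (\<Sum>j\<le>m. poly (r j) (of_nat n) * f n ^ j) = 0"
    by (simp add: r_def)
  then have "r m = 0"
    using Suc.IH by blast
  then have "d * (shift_poly (q (Suc m)) * q m - q (Suc m) * shift_poly (q m))
      = smult (of_nat (Suc m)) (q (Suc m) * shift_poly (q (Suc m)))"
    by (simp add: r_def reduced_relation_below_top d_def)
  then show False
    using shift_identity_impossible[OF Suc.prems(1) of_nat_neq_0] by (simp only: d_def)
qed

theorem mainTheorem12: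
  shows "transcendental_function_over_alg
           (\<lambda>n. complex_of_real (\<Sum>j=1..n. 1 / (real j)^2))"
proof -
  define f where "f = (\<lambda>n. complex_of_real (\<Sum>j=1..n. 1 / (real j)^2))"
  have step: "f (Suc n) = f n + 1 / (of_nat n + 1)\<^sup>2" for n
    by (simp add: f_def add.commute)
  show ?thesis
    unfolding transcendental_function_over_alg_def algebraic_function_over_alg_def f_def[symmetric]
    using no_eventual_algebraic_relation[OF step] by blast
qed

end
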